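(* Let $\nu:\mathcal{P}(\mathbf{N})\to\mathbf{R}$ be an abstract upper density and let $\mathcal{Z}_\nu=\{A\subseteq\mathbf{N}:\nu(A)=0\}$. Then there exists a normalized capacity $\rho:\mathscr{B}(\mathrm{Ult}(\mathcal{Z}_\nu))\to\mathbf{R}$ such that for every $A\subseteq\mathbf{N}$, $$\nu(A)=\int_{\mathrm{Ult}(\mathcal{Z}_\nu)}\mu_{\mathcal{F}}(A)\,\mathrm{d}\rho(\mathcal{F}).$$
   Context: An abstract upper density is a set function $\nu:\mathcal{P}(\mathbf{N})\to\mathbf{R}$ that is a normalized capacity (monotone, $\nu(\emptyset)=0$, $\nu(\mathbf{N})=1$), diffuse ($\nu(A)=0$ for every finite $A$), and subadditive ($\nu(A\cup B)\le\nu(A)+\nu(B)$). For an ideal $\mathcal{I}$ on $\mathbf{N}$ (closed under subsets and finite unions, not containing $\mathbf{N}$, containing all finite sets) with dual filter $\mathcal{I}^\star=\{A:\mathbf{N}\setminus A\in\mathcal{I}\}$: $\mathrm{Ult}(\mathcal{I})$ is the set of ultrafilters $\mathcal{F}$ on $\mathbf{N}$ with $\mathcal{I}^\star\subseteq\mathcal{F}$, with the topology induced from the Stone–Čech space $\beta\mathbf{N}$ (basic clopen sets $\{\mathcal{F}:A\in\mathcal{F}\}$), $\mathscr{B}$ is the Borel $\sigma$-algebra, and $\mu_{\mathcal{F}}(A)=1$ if $A\in\mathcal{F}$ and $0$ otherwise. A normalized capacity on a $\sigma$-algebra is a monotone set function with value $0$ at $\emptyset$ and $1$ at the whole space. The Choquet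 integral of a bounded function $f$ with respect to a normalized capacity $\rho$ on $S$ is $\int_0^\infty\rho(f\ge t)\,\mathrm{d}t+\int_{-\infty}^0[\rho(f\ge t)-1]\,\mathrm{d}t$. *)

theory Defs
  imports "HOL-Analysis.Analysis"
begin

definition abstract_upper_density :: "(nat set \<Rightarrow> real) \<Rightarrow> bool" where
  "abstract_upper_density \<nu> \<longleftrightarrow>
     (\<forall>A B. A \<subseteq> B \<longrightarrow> \<nu> A \<le> \<nu> B) \<and> \<nu> {} = 0 \<and> \<nu> UNIV = 1 \<and>
     (\<forall>A. finite A \<longrightarrow> \<nu> A = 0) \<and>
     (\<forall>A B. \<nu> (A \<union> B) \<le> \<nu> A + \<nu> B)"

definition is_ultrafilter :: "nat set set \<Rightarrow> bool" where
  "is_ultrafilter F \<longleftrightarrow>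
     UNIV \<in> F \<and> {} \<notin> F \<and>
     (\<forall>A B. A \<in> F \<longrightarrow> A \<subseteq> B \<longrightarrow> B \<in> F) \<and>
     (\<forall>A B. A \<in> F \<longrightarrow> B \<in> F \<longrightarrow> A \<inter> B \<in> F) \<and>
     (\<forall>A. A \<in> F \<or> - A \<in> F)"

definition dual_filter :: "nat set set \<Rightarrow> nat set set" where
  "dual_filter I = {A. - A \<in> I}"

definition Ult :: "nat set set \<Rightarrow> nat set set set" where
  "Ult I = {F. is_ultrafilter F \<and> dual_filter I \<subseteq> F}"

text \<open>Basic clopen sets of the subspace topology inherited from beta N.\<close>
definition ult_basic :: "nat set set \<Rightarrow> nat set \<Rightarrow> nat set set set" where
  "ult_basic I A = {F \<in> Ult I. A \<in> F}"

definition ult_open :: "nat set set \<Rightarrow> nat set set set \<Rightarrow> bool" where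
  "ult_open I U \<longleftrightarrow> U \<subseteq> Ult I \<and> (\<forall>F\<in>U. \<exists>A. A \<in> F \<and> ult_basic I A \<subseteq> U)"

definition ult_borel :: "nat set set \<Rightarrow> nat set set set set" where
  "ult_borel I = sigma_sets (Ult I) {U. ult_open I U}"

definition normalized_capacity :: "'a set \<Rightarrow> 'a set set \<Rightarrow> ('a set \<Rightarrow> real) \<Rightarrow> bool" where
  "normalized_capacity S \<Sigma> \<rho> \<longleftrightarrow>
     (\<forall>A\<in>\<Sigma>. \<forall>B\<in>\<Sigma>. A \<subseteq> B \<longrightarrow> \<rho> A \<le> \<rho> B) \<and> \<rho> {} = 0 \<and> \<rho> S = 1"

definition choquet_integral :: "'a set \<Rightarrow> ('a set \<Rightarrow> real) \<Rightarrow> ('a \<Rightarrow> real) \<Rightarrow> real" where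
  "choquet_integral S \<rho> f =
     (LBINT t:{0..}. \<rho> {x \<in> S. f x \<ge> t}) + (LBINT t:{..<0}. \<rho> {x \<in> S. f x \<ge> t} - 1)"

definition mu_uf :: "nat set set \<Rightarrow> nat set \<Rightarrow> real" where
  "mu_uf F A = (if A \<in> F then 1 else 0)"

end

theory Submission
  imports Defs
begin

text \<open>The sets of \<open>\<nu>\<close>-density zero form an ideal \<open>Z\<close>. Writing \<open>[A]\<close> for the clopen set of
  ultrafilters in \<open>Ult(Z)\<close> containing \<open>A\<close>, the inclusion \<open>[A] \<subseteq> [B]\<close> forces \<open>\<nu>(A - B) = 0\<close>
  (otherwise some ultrafilter of \<open>Ult(Z)\<close> contains \<open>A - B\<close>), hence \<open>\<nu> A \<le> \<nu> B\<close> by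
  subadditivity. So the outer capacity \<open>\<rho>(X) = inf {\<nu> A. X \<subseteq> [A]}\<close> is monotone and
  satisfies \<open>\<rho>([A]) = \<nu> A\<close>, and the Choquet integral of the \<open>0/1\<close>-valued function
  \<open>F \<mapsto> \<mu>\<^sub>F(A)\<close>, the indicator of \<open>[A]\<close>, is \<open>\<rho>([A])\<close>.\<close>

definition proper_filter :: "'a set set \<Rightarrow> bool" where
  "proper_filter G \<longleftrightarrow> UNIV \<in> G \<and> {} \<notin> G \<and>
     (\<forall>A B. A \<in> G \<longrightarrow> A \<subseteq> B \<longrightarrow> B \<in> G) \<and> (\<forall>A B. A \<in> G \<longrightarrow> B \<in> G \<longrightarrow> A \<inter> B \<in> G)"

lemma proper_filterI:
  assumes "UNIV \<in> G" "{} \<notin> G" "\<And>A B. A \<in> G \<Longrightarrow> A \<subseteq> B \<Longrightarrow> B \<in> G"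
    "\<And>A B. A \<in> G \<Longrightarrow> B \<in> G \<Longrightarrow> A \<inter> B \<in> G"
  shows "proper_filter G"
  using assms unfolding proper_filter_def by blast

lemma proper_filterD:
  assumes "proper_filter G"
  shows "UNIV \<in> G" "{} \<notin> G" "A \<in> G \<Longrightarrow> A \<subseteq> B \<Longrightarrow> B \<in> G"
    "A \<in> G \<Longrightarrow> B \<in> G \<Longrightarrow> A \<inter> B \<in> G"
  using assms unfolding proper_filter_def by blast+

lemma is_ultrafilter_iff:
  "is_ultrafilter F \<longleftrightarrow> proper_filter F \<and> (\<forall>A. A \<in> F \<or> - A \<in> F)"
  unfolding is_ultrafilter_def proper_filter_def by blast

lemma proper_filter_chain_Union:
  assumes "\<C> \<noteq> {}" and filters: "\<And>H. H \<in> \<C> \<Longrightarrow> proper_filter H"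
    and chain: "\<And>H K. H \<in> \<C> \<Longrightarrow> K \<in> \<C> \<Longrightarrow> H \<subseteq> K \<or> K \<subseteq> H"
  shows "proper_filter (\<Union>\<C>)"
proof (rule proper_filterI)
  show "UNIV \<in> \<Union>\<C>" using assms(1) filters proper_filterD(1) by blast
  show "{} \<notin> \<Union>\<C>" using filters proper_filterD(2) by blast
  show "B \<in> \<Union>\<C>" if "A \<in> \<Union>\<C>" "A \<subseteq> B" for A B
    using that filters proper_filterD(3) by blast
  show "A \<inter> B \<in> \<Union>\<C>" if "A \<in> \<Union>\<C>" "B \<in> \<Union>\<C>" for A B
  proof -
    from that obtain H K where "H \<in> \<C>" "K \<in> \<C>" "A \<in> H" "B \<in> K" by blast
    with chain[of H K] have "A \<in> H \<and> B \<in> H \<or> A \<in> K \<and> B \<in> K" by blast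
    with \<open>H \<in> \<C>\<close> \<open>K \<in> \<C>\<close> show ?thesis using filters proper_filterD(4) by blast
  qed
qed

lemma maximal_proper_filter_is_ultrafilter:
  assumes M: "proper_filter M"
    and max: "\<And>H. proper_filter H \<Longrightarrow> M \<subseteq> H \<Longrightarrow> H = M"
  shows "is_ultrafilter M"
  unfolding is_ultrafilter_iff
proof (intro conjI allI M)
  fix X
  let ?MX = "{Y. \<exists>m\<in>M. m \<inter> X \<subseteq> Y}"
  show "X \<in> M \<or> - X \<in> M"
  proof (cases "{} \<in> ?MX")
    case True
    then obtain m where "m \<in> M" "m \<subseteq> - X" by blast
    then show ?thesis using proper_filterD(3)[OF M] by blast
  next
    case False
    have "proper_filter ?MX"
    proof (rule proper_filterI)
      show "UNIV \<in> ?MX" using proper_filterD(1)[OF M] by blast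
      show "A \<inter> B \<in> ?MX" if "A \<in> ?MX" "B \<in> ?MX" for A B
      proof -
        from that obtain m n where "m \<in> M" "n \<in> M" "m \<inter> X \<subseteq> A" "n \<inter> X \<subseteq> B" by blast
        moreover have "m \<inter> n \<in> M" using proper_filterD(4)[OF M \<open>m \<in> M\<close> \<open>n \<in> M\<close>] .
        ultimately show ?thesis by blast
      qed
    qed (use False in blast)+
    moreover have "M \<subseteq> ?MX" by blast
    ultimately have "?MX = M" by (rule max)
    moreover have "X \<in> ?MX" using proper_filterD(1)[OF M] by blast
    ultimately show ?thesis by blast
  qed
qed

lemma proper_filter_extends_to_ultrafilter:
  assumes "proper_filter G"
  shows "\<exists>F. is_ultrafilter F \<and> G \<subseteq> F"
proof -
  let ?\<A> = "{H. proper_filter H \<and> G \<subseteq> H}"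
  have "\<exists>M\<in>?\<A>. \<forall>H\<in>?\<A>. M \<subseteq> H \<longrightarrow> H = M"
  proof (rule subset_Zorn_nonempty)
    show "?\<A> \<noteq> {}" using assms by blast
  next
    fix \<C> assume ne: "\<C> \<noteq> {}" and "subset.chain ?\<A> \<C>"
    then have sub: "\<C> \<subseteq> ?\<A>" and chain: "\<And>H K. H \<in> \<C> \<Longrightarrow> K \<in> \<C> \<Longrightarrow> H \<subseteq> K \<or> K \<subseteq> H"
      unfolding subset_chain_def by blast+
    have "proper_filter (\<Union>\<C>)"
      by (rule proper_filter_chain_Union[OF ne _ chain]) (use sub in blast)
    moreover have "G \<subseteq> \<Union>\<C>" using ne sub by blast
    ultimately show "\<Union>\<C> \<in> ?\<A>" by blast
  qed
  then obtain M where M: "proper_filter M" "G \<subseteq> M"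
    and max: "\<And>H. proper_filter H \<Longrightarrow> M \<subseteq> H \<Longrightarrow> H = M"
    by (metis (mono_tags, lifting) mem_Collect_eq order_trans)
  have "is_ultrafilter M" by (rule maximal_proper_filter_is_ultrafilter[OF M(1) max])
  with M(2) show ?thesis by blast
qed

lemma Ult_contains_positive_set:
  fixes I :: "nat set set"
  assumes down: "\<And>Y Z. Y \<in> I \<Longrightarrow> Z \<subseteq> Y \<Longrightarrow> Z \<in> I"
    and union: "\<And>Y Z. Y \<in> I \<Longrightarrow> Z \<in> I \<Longrightarrow> Y \<union> Z \<in> I"
    and "{} \<in> I" and "C \<notin> I"
  shows "\<exists>F \<in> Ult I. C \<in> F"
proof -
  let ?G = "{Y. \<exists>i\<in>I. C - i \<subseteq> Y}"
  have "proper_filter ?G"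
  proof (rule proper_filterI)
    show "UNIV \<in> ?G" using \<open>{} \<in> I\<close> by blast
    show "{} \<notin> ?G"
    proof
      assume "{} \<in> ?G"
      then obtain i where "i \<in> I" "C \<subseteq> i" by blast
      with down \<open>C \<notin> I\<close> show False by metis
    qed
    show "B \<in> ?G" if "A \<in> ?G" "A \<subseteq> B" for A B using that by blast
    show "A \<inter> B \<in> ?G" if "A \<in> ?G" "B \<in> ?G" for A B
    proof -
      from that obtain i j where "i \<in> I" "j \<in> I" "C - i \<subseteq> A" "C - j \<subseteq> B" by blast
      then have "C - (i \<union> j) \<subseteq> A \<inter> B" by blast
      with union[OF \<open>i \<in> I\<close> \<open>j \<in> I\<close>] show ?thesis by blast
    qed
  qed
  then obtain F where uf: "is_ultrafilter F" and GF: "?G \<subseteq> F"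
    using proper_filter_extends_to_ultrafilter by blast
  have "dual_filter I \<subseteq> ?G"
  proof
    fix A assume "A \<in> dual_filter I"
    then have "- A \<in> I" unfolding dual_filter_def by blast
    moreover have "C - (- A) \<subseteq> A" by blast
    ultimately show "A \<in> ?G" by blast
  qed
  with uf GF have "F \<in> Ult I" unfolding Ult_def by auto
  moreover have "C \<in> F" using GF \<open>{} \<in> I\<close> by blast
  ultimately show ?thesis by blast
qed

lemma abstract_upper_density_mono:
  "abstract_upper_density \<nu> \<Longrightarrow> A \<subseteq> B \<Longrightarrow> \<nu> A \<le> \<nu> B"
  unfolding abstract_upper_density_def by blast

lemma abstract_upper_density_Un_le:
  "abstract_upper_density \<nu> \<Longrightarrow> \<nu> (A \<union> B) \<le> \<nu> A + \<nu> B"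
  unfolding abstract_upper_density_def by blast

lemma abstract_upper_density_nonneg:
  "abstract_upper_density \<nu> \<Longrightarrow> \<nu> A \<ge> 0"
  unfolding abstract_upper_density_def by (metis empty_subsetI)

lemma upper_density_basic_mono:
  assumes \<nu>: "abstract_upper_density \<nu>"
    and sub: "ult_basic {A. \<nu> A = 0} A \<subseteq> ult_basic {A. \<nu> A = 0} B"
  shows "\<nu> A \<le> \<nu> B"
proof -
  note nonneg = abstract_upper_density_nonneg[OF \<nu>]
  note subadd = abstract_upper_density_Un_le[OF \<nu>]
  have "\<nu> (A - B) = 0"
  proof (rule ccontr)
    assume "\<nu> (A - B) \<noteq> 0"
    moreover have "\<nu> Z = 0" if "\<nu> Y = 0" "Z \<subseteq> Y" for Y Z
      using abstract_upper_density_mono[OF \<nu> \<open>Z \<subseteq> Y\<close>] nonneg[of Z] that by simp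
    moreover have "\<nu> (Y \<union> Z) = 0" if "\<nu> Y = 0" "\<nu> Z = 0" for Y Z
      using subadd[of Y Z] nonneg[of "Y \<union> Z"] that by simp
    moreover have "\<nu> {} = 0" using \<nu> unfolding abstract_upper_density_def by blast
    ultimately obtain F where F: "F \<in> Ult {A. \<nu> A = 0}" "A - B \<in> F"
      using Ult_contains_positive_set[of "{A. \<nu> A = 0}" "A - B"] by auto
    then have uf: "is_ultrafilter F" unfolding Ult_def by blast
    with F have "A \<in> F" unfolding is_ultrafilter_def by blast
    with F sub have "B \<in> F" unfolding ult_basic_def by blast
    with uf F have "B \<inter> (A - B) \<in> F" unfolding is_ultrafilter_def by blast
    with uf show False unfolding is_ultrafilter_def by simp
  qed
  have "\<nu> A \<le> \<nu> ((A - B) \<union> B)" by (rule abstract_upper_density_mono[OF \<nu>]) blast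
  also have "\<dots> \<le> \<nu> (A - B) + \<nu> B" by (rule subadd)
  finally show ?thesis using \<open>\<nu> (A - B) = 0\<close> by simp
qed

definition outer_capacity :: "(nat set \<Rightarrow> real) \<Rightarrow> nat set set set \<Rightarrow> real" where
  "outer_capacity \<nu> X =
     (INF A \<in> {A. X \<inter> Ult {A. \<nu> A = 0} \<subseteq> ult_basic {A. \<nu> A = 0} A}. \<nu> A)"

lemma ult_basic_UNIV: "ult_basic I UNIV = Ult I"
  unfolding ult_basic_def Ult_def is_ultrafilter_def by auto

lemma ult_basic_empty: "ult_basic I {} = {}"
  unfolding ult_basic_def Ult_def is_ultrafilter_def by auto

lemma abstract_upper_density_bdd_below:
  assumes "abstract_upper_density \<nu>"
  shows "bdd_below (\<nu> ` \<A>)"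
  by (rule bdd_belowI2[where m = 0]) (rule abstract_upper_density_nonneg[OF assms])

lemma outer_capacity_mono:
  assumes "abstract_upper_density \<nu>" "X \<subseteq> Y"
  shows "outer_capacity \<nu> X \<le> outer_capacity \<nu> Y"
  unfolding outer_capacity_def
proof (rule cINF_superset_mono)
  show "{A. Y \<inter> Ult {A. \<nu> A = 0} \<subseteq> ult_basic {A. \<nu> A = 0} A} \<noteq> {}"
    using ult_basic_UNIV by blast
qed (use assms abstract_upper_density_bdd_below in auto)

lemma outer_capacity_ult_basic:
  assumes "abstract_upper_density \<nu>"
  shows "outer_capacity \<nu> (ult_basic {A. \<nu> A = 0} A) = \<nu> A"
proof -
  let ?basic = "ult_basic {A. \<nu> A = 0}"
  have "?basic A \<inter> Ult {A. \<nu> A = 0} = ?basic A"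
    unfolding ult_basic_def by blast
  then have "outer_capacity \<nu> (?basic A) = (INF B \<in> {B. ?basic A \<subseteq> ?basic B}. \<nu> B)"
    unfolding outer_capacity_def by simp
  also have "\<dots> = \<nu> A"
  proof (rule antisym)
    show "(INF B \<in> {B. ?basic A \<subseteq> ?basic B}. \<nu> B) \<le> \<nu> A"
      by (rule cINF_lower) (use abstract_upper_density_bdd_below[OF assms] in auto)
    show "\<nu> A \<le> (INF B \<in> {B. ?basic A \<subseteq> ?basic B}. \<nu> B)"
      by (rule cINF_greatest) (use upper_density_basic_mono[OF assms] in auto)
  qed
  finally show ?thesis .
qed

lemma outer_capacity_empty:
  "abstract_upper_density \<nu> \<Longrightarrow> outer_capacity \<nu> {} = 0"
  using outer_capacity_ult_basic[of \<nu> "{}"]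
  unfolding ult_basic_empty abstract_upper_density_def by simp

lemma outer_capacity_Ult:
  "abstract_upper_density \<nu> \<Longrightarrow> outer_capacity \<nu> (Ult {A. \<nu> A = 0}) = 1"
  using outer_capacity_ult_basic[of \<nu> UNIV]
  unfolding ult_basic_UNIV abstract_upper_density_def by simp

lemma normalized_capacity_outer_capacity:
  "abstract_upper_density \<nu> \<Longrightarrow>
    normalized_capacity (Ult {A. \<nu> A = 0}) \<Sigma> (outer_capacity \<nu>)"
  unfolding normalized_capacity_def
  by (simp add: outer_capacity_mono outer_capacity_empty outer_capacity_Ult)

lemma choquet_integral_indicator:
  fixes \<rho> :: "'a set \<Rightarrow> real"
  assumes "\<rho> {} = 0" "\<rho> S = 1"
  shows "choquet_integral S \<rho> (indicator B) = \<rho> (S \<inter> B)"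
proof -
  have level: "{x \<in> S. t \<le> indicator B x} =
      (if t \<le> 0 then S else if t \<le> 1 then S \<inter> B else {})" for t :: real
    by (auto simp: indicator_def)
  have "(\<lambda>t. indicator {0..} t *\<^sub>R \<rho> {x \<in> S. t \<le> indicator B x}) =
      (\<lambda>t::real. \<rho> (S \<inter> B) * indicator {0..1} t + (1 - \<rho> (S \<inter> B)) * indicator {0} t)"
    unfolding level by (auto simp: assms indicator_def)
  then have "(LBINT t::real:{0..}. \<rho> {x \<in> S. t \<le> indicator B x}) = \<rho> (S \<inter> B)"
    by (simp add: set_lebesgue_integral_def)
  moreover have "(LBINT t::real:{..<0}. \<rho> {x \<in> S. t \<le> indicator B x} - 1) = 0"
    unfolding set_lebesgue_integral_def level
    by (rule integral_eq_zero_AE) (auto simp: assms indicator_def)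
  ultimately show ?thesis unfolding choquet_integral_def by simp
qed

theorem corollary1p2:
  fixes \<nu> :: "nat set \<Rightarrow> real"
  assumes "abstract_upper_density \<nu>"
  shows "\<exists>\<rho> :: nat set set set \<Rightarrow> real.
           normalized_capacity (Ult {A. \<nu> A = 0}) (ult_borel {A. \<nu> A = 0}) \<rho> \<and>
           (\<forall>A :: nat set. \<nu> A =
              choquet_integral (Ult {A. \<nu> A = 0}) \<rho> (\<lambda>F. mu_uf F A))"
proof (intro exI conjI allI)
  let ?S = "Ult {A. \<nu> A = 0}"
  show "normalized_capacity ?S (ult_borel {A. \<nu> A = 0}) (outer_capacity \<nu>)"
    using assms by (rule normalized_capacity_outer_capacity)
  fix A
  have "(\<lambda>F. mu_uf F A) = indicator {F. A \<in> F}"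
    by (auto simp: mu_uf_def indicator_def)
  moreover have "?S \<inter> {F. A \<in> F} = ult_basic {A. \<nu> A = 0} A"
    unfolding ult_basic_def by blast
  ultimately have "choquet_integral ?S (outer_capacity \<nu>) (\<lambda>F. mu_uf F A) =
      outer_capacity \<nu> (ult_basic {A. \<nu> A = 0} A)"
    using choquet_integral_indicator[OF outer_capacity_empty outer_capacity_Ult, OF assms assms]
    by metis
  then show "\<nu> A = choquet_integral ?S (outer_capacity \<nu>) (\<lambda>F. mu_uf F A)"
    using outer_capacity_ult_basic[OF assms] by simp
qed

end
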